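(* Let $X\in\mathbb{R}^{n\times m}$ be a random matrix with independent centered entries that are sub-Poisson with variance proxy $\sigma^2$, and let $S_i=\|X_{i:}\|_1-\mathbb{E}\|X_{i:}\|_1$ for $i\in[n]$. If $m\sigma^2\le8\log(en)$, then for all $t\ge0$, $$\Pr\Big(\sum_{i=1}^n\mathbb{I}\{S_i\ge(1+t)m\sigma^2\}\ge\frac{en}{e^{m\sigma^2/8}}\Big)\le(en)^{-t}.$$ If $m\sigma^2\ge8\log(en)$, then for all $t\ge0$, $$\Pr\Big(\max_iS_i\ge(1+t)\sqrt{8m\sigma^2\log(en)}\Big)\le(en)^{-t}.$$
   Context: A real random variable $Y$ is sub-Poisson with variance proxy $\sigma^2\ge0$ if $\mathbb{E}e^{\lambda(Y-\mathbb{E}Y)}\le\exp\{\sigma^2(e^{|\lambda|}-1-|\lambda|)\}$ for all $\lambda\in\mathbb{R}$. $\|\cdot\|_1$ is the $\ell_1$ norm of a row. *)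

theory Defs
  imports "HOL-Probability.Probability"
begin

definition sub_poisson :: "'a measure \<Rightarrow> ('a \<Rightarrow> real) \<Rightarrow> real \<Rightarrow> bool" where
  "sub_poisson M Y s2 \<longleftrightarrow> s2 \<ge> 0 \<and> integrable M Y \<and>
     (\<forall>l::real. integrable M (\<lambda>x. exp (l * (Y x - integral\<^sup>L M Y))) \<and>
        integral\<^sup>L M (\<lambda>x. exp (l * (Y x - integral\<^sup>L M Y)))
          \<le> exp (s2 * (exp \<bar>l\<bar> - 1 - \<bar>l\<bar>)))"

definition row_dev :: "'a measure \<Rightarrow> (nat \<Rightarrow> nat \<Rightarrow> 'a \<Rightarrow> real) \<Rightarrow> nat \<Rightarrow> nat \<Rightarrow> 'a \<Rightarrow> real" where
  "row_dev M X m i \<omega> = (\<Sum>j<m. \<bar>X i j \<omega>\<bar>) - integral\<^sup>L M (\<lambda>\<omega>'. \<Sum>j<m. \<bar>X i j \<omega>'\<bar>)"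

end

theory Submission
  imports Defs
begin

(* For l >= 0 the pointwise bound exp (l |y|) <= exp (l y) + exp (- l y) - 1 + l |y| turns the
   sub-Poisson bound on X_ij into E exp (l (|X_ij| - E |X_ij|)) <= exp (2 sigma2 psi l), where
   psi l = exp l - 1 - l. By independence and Markov's inequality, any k given rows all have
   S_i >= x with probability at most p^k, p = exp (- l x + 2 m sigma2 psi l); a union bound over
   the (n choose k) <= (e n / k)^k sets of k rows then bounds the probability that at least k rows
   exceed x. For m sigma2 <= 8 log (e n) take l = 1/4, x = (1 + t) m sigma2 and
   k = ceil (e n exp (- m sigma2 / 8)); then k m sigma2 / 8 >= log (e n) because w exp (- w)
   decreases on [1, oo). For m sigma2 >= 8 log (e n) take k = 1 and
   l = sqrt (log (e n) / (2 m sigma2)) <= 1/4, so that psi l <= l^2. *)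

lemma power_div_fact_le_exp:
  fixes x :: real
  assumes "0 \<le> x"
  shows "x ^ n / fact n \<le> exp x"
proof -
  have "(\<Sum>i\<in>{n}. inverse (fact i) * x ^ i) \<le> (\<Sum>i. inverse (fact i) * x ^ i)"
    using assms by (intro sum_le_suminf[OF summable_exp]) auto
  then show ?thesis by (simp add: exp_def divide_inverse mult.commute)
qed

lemma binomial_le_exp_mult_div_power:
  assumes "1 \<le> k"
  shows "real (n choose k) \<le> (exp 1 * real n / real k) ^ k"
proof -
  have "real (n choose k) * fact k \<le> real n ^ k"
    using binomial_fact_pow[of n k] by (metis of_nat_fact of_nat_le_iff of_nat_mult of_nat_power)
  then have "real (n choose k) \<le> real n ^ k / fact k"
    by (simp add: field_simps)
  also have "\<dots> = (real n / real k) ^ k * (real k ^ k / fact k)"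
    using assms by (simp add: power_divide)
  also have "\<dots> \<le> (real n / real k) ^ k * exp 1 ^ k"
    by (intro mult_left_mono) (simp_all add: power_div_fact_le_exp flip: exp_of_nat_mult)
  also have "\<dots> = (exp 1 * real n / real k) ^ k"
    by (simp add: power_mult_distrib[symmetric] mult.commute)
  finally show ?thesis .
qed

lemma exp_abs_le:
  fixes l x :: real
  shows "exp (l * \<bar>x\<bar>) \<le> exp (l * x) + exp (- l * x) - 1 + l * \<bar>x\<bar>"
proof (cases "x \<ge> 0")
  case True
  have "1 + - (l * x) \<le> exp (- (l * x))" by (rule exp_ge_add_one_self)
  with True show ?thesis by simp
next
  case False
  then show ?thesis by (simp add: algebra_simps)
qed

lemma exp_minus_one_minus_le_square:
  fixes l :: real
  assumes "0 \<le> l" and "l \<le> 1"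
  shows "exp l - 1 - l \<le> l\<^sup>2"
  using assms exp_bound[of l] by simp

lemma exp_minus_mult_two_exp_le:
  fixes a u :: real
  assumes "0 \<le> a" and "0 \<le> u"
  shows "exp (- a) * (2 * exp u - 1 + a) \<le> exp (2 * u)"
proof -
  have "exp (- a) * (1 + a) \<le> exp (- a) * exp a"
    by (intro mult_left_mono exp_ge_add_one_self) simp
  then have "exp (- a) * (1 + a) \<le> 1" by (simp flip: exp_add)
  moreover have "exp (- a) * (2 * exp u - 2) \<le> 2 * exp u - 2"
    using assms by (intro mult_left_le_one_le) auto
  moreover have "2 * exp u - 1 \<le> exp (2 * u)"
    using zero_le_power2[of "exp u - 1"]
    by (simp add: power2_eq_square algebra_simps flip: exp_add)
  ultimately show ?thesis by (simp add: algebra_simps)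
qed

lemma mult_exp_minus_antimono:
  fixes w L :: real
  assumes "1 \<le> w" and "w \<le> L"
  shows "L * exp (- L) \<le> w * exp (- w)"
proof -
  have "ln (L / w) \<le> L / w - 1" using assms by (intro ln_le_minus_one) auto
  also have "\<dots> \<le> L - w"
    using assms mult_nonneg_nonneg[of "L - w" "w - 1"] by (simp add: field_simps)
  finally have "ln L - L \<le> ln w - w" using assms by (simp add: ln_div)
  then have "exp (ln L - L) \<le> exp (ln w - w)" by simp
  then show ?thesis using assms by (simp add: exp_diff exp_minus field_simps)
qed

lemma choose_mult_exp_power_le:
  fixes w t :: real and n k :: nat
  assumes w: "1 \<le> w" "w \<le> ln (exp 1 * real n)" and t: "0 \<le> t"
    and k: "exp 1 * real n / exp w \<le> real k"
  shows "real (n choose k) * exp (- w - 2 * t * w) ^ k \<le> (exp 1 * real n) powr (- t)"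
proof -
  define L where "L = ln (exp 1 * real n)"
  have "0 < real n" using w by (cases "n = 0") auto
  then have eL: "exp L = exp 1 * real n" unfolding L_def by simp
  have "0 < exp 1 * real n / exp w" using \<open>0 < real n\<close> by simp
  with k have "1 \<le> k" by (cases k) auto
  have "L \<le> w * real k"
  proof -
    have "L = L * exp (- L) * exp L" by (simp flip: exp_add)
    also have "\<dots> \<le> w * exp (- w) * exp L"
      using mult_exp_minus_antimono[OF w(1)] w(2) by (intro mult_right_mono) (auto simp: L_def)
    also have "\<dots> = w * (exp 1 * real n / exp w)" using eL by (simp add: exp_minus field_simps)
    also have "\<dots> \<le> w * real k" using k w by (intro mult_left_mono) auto
    finally show ?thesis .
  qed
  have "real (n choose k) * exp (- w - 2 * t * w) ^ k
      \<le> (exp 1 * real n / real k) ^ k * exp (- w - 2 * t * w) ^ k"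
    using \<open>1 \<le> k\<close> by (intro mult_right_mono binomial_le_exp_mult_div_power) auto
  also have "\<dots> = (exp 1 * real n / real k * exp (- w - 2 * t * w)) ^ k"
    by (simp only: power_mult_distrib)
  also have "\<dots> = (exp 1 * real n / exp w / real k * exp (- 2 * t * w)) ^ k"
    by (simp add: exp_diff exp_minus field_simps)
  also have "\<dots> \<le> exp (- 2 * t * w) ^ k"
  proof (intro power_mono mult_left_le_one_le)
    show "exp 1 * real n / exp w / real k \<le> 1"
      using k \<open>1 \<le> k\<close> by (simp add: pos_divide_le_eq mult.commute)
  qed auto
  also have "\<dots> = exp (- (t * (2 * (w * real k))))" by (simp add: algebra_simps flip: exp_of_nat_mult)
  also have "\<dots> \<le> exp (- (t * L))"
  proof -
    have "L \<le> 2 * (w * real k)"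
      using \<open>L \<le> w * real k\<close> mult_nonneg_nonneg[of w "real k"] w by linarith
    then show ?thesis using t by (simp add: mult_left_mono)
  qed
  also have "\<dots> = (exp 1 * real n) powr (- t)" using \<open>0 < real n\<close> by (simp add: L_def powr_def)
  finally show ?thesis .
qed

lemma (in finite_measure) measure_card_ge_le_choose:
  assumes "finite I"
    and meas: "\<And>i. i \<in> I \<Longrightarrow> {\<omega> \<in> space M. P i \<omega>} \<in> sets M"
    and joint: "\<And>T. T \<subseteq> I \<Longrightarrow> card T = k \<Longrightarrow> measure M {\<omega> \<in> space M. \<forall>i\<in>T. P i \<omega>} \<le> p"
  shows "measure M {\<omega> \<in> space M. k \<le> card {i \<in> I. P i \<omega>}} \<le> real (card I choose k) * p"
proof -
  define \<T> where "\<T> = {T. T \<subseteq> I \<and> card T = k}"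
  have fin: "finite \<T>" unfolding \<T>_def using \<open>finite I\<close> by (auto intro: finite_subset[of _ "Pow I"])
  have sets: "{\<omega> \<in> space M. \<forall>i\<in>T. P i \<omega>} \<in> sets M" if "T \<in> \<T>" for T
    using that meas \<open>finite I\<close> unfolding \<T>_def
    by (intro sets.sets_Collect_finite_All) (auto intro: finite_subset)
  have "{\<omega> \<in> space M. k \<le> card {i \<in> I. P i \<omega>}} \<subseteq> (\<Union>T\<in>\<T>. {\<omega> \<in> space M. \<forall>i\<in>T. P i \<omega>})"
  proof
    fix \<omega> assume "\<omega> \<in> {\<omega> \<in> space M. k \<le> card {i \<in> I. P i \<omega>}}"
    then obtain T where "\<omega> \<in> space M" "T \<subseteq> {i \<in> I. P i \<omega>}" "card T = k"
      by (auto elim: obtain_subset_with_card_n)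
    then show "\<omega> \<in> (\<Union>T\<in>\<T>. {\<omega> \<in> space M. \<forall>i\<in>T. P i \<omega>})" unfolding \<T>_def by blast
  qed
  then have "measure M {\<omega> \<in> space M. k \<le> card {i \<in> I. P i \<omega>}}
      \<le> measure M (\<Union>T\<in>\<T>. {\<omega> \<in> space M. \<forall>i\<in>T. P i \<omega>})"
    using fin sets by (intro finite_measure_mono) auto
  also have "\<dots> \<le> (\<Sum>T\<in>\<T>. measure M {\<omega> \<in> space M. \<forall>i\<in>T. P i \<omega>})"
    using fin sets by (intro measure_UNION_le) auto
  also have "\<dots> \<le> (\<Sum>T\<in>\<T>. p)"
    by (intro sum_mono joint) (auto simp: \<T>_def)
  also have "\<dots> = real (card I choose k) * p"
    using n_subsets[OF \<open>finite I\<close>, of k] by (simp add: \<T>_def)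
  finally show ?thesis .
qed

lemma row_dev_measurable:
  assumes "\<And>j. j < m \<Longrightarrow> X i j \<in> borel_measurable M"
  shows "row_dev M X m i \<in> borel_measurable M"
  using assms unfolding row_dev_def by measurable

lemma row_dev_eq_sum:
  assumes "\<And>j. j < m \<Longrightarrow> integrable M (X i j)"
  shows "row_dev M X m i \<omega> = (\<Sum>j<m. \<bar>X i j \<omega>\<bar> - integral\<^sup>L M (\<lambda>\<omega>. \<bar>X i j \<omega>\<bar>))"
  using assms unfolding row_dev_def by (simp add: sum_subtractf)

context prob_space
begin

lemma sub_poisson_centered_mgf:
  assumes "sub_poisson M Y s2" and "expectation Y = 0"
  shows "integrable M (\<lambda>x. exp (l * Y x))"
    and "expectation (\<lambda>x. exp (l * Y x)) \<le> exp (s2 * (exp \<bar>l\<bar> - 1 - \<bar>l\<bar>))"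
  using assms unfolding sub_poisson_def by auto

lemma sub_poisson_exp_abs_le:
  assumes sp: "sub_poisson M Y s2" and centered: "expectation Y = 0" and l: "0 \<le> l"
  shows "integrable M (\<lambda>x. exp (l * \<bar>Y x\<bar>))"
    and "expectation (\<lambda>x. exp (l * \<bar>Y x\<bar>))
           \<le> 2 * exp (s2 * (exp l - 1 - l)) - 1 + l * expectation (\<lambda>x. \<bar>Y x\<bar>)"
proof -
  have iA: "integrable M (\<lambda>x. \<bar>Y x\<bar>)" using sp unfolding sub_poisson_def by auto
  have i1: "integrable M (\<lambda>x. exp (l * Y x))"
    and b1: "expectation (\<lambda>x. exp (l * Y x)) \<le> exp (s2 * (exp l - 1 - l))"
    using sub_poisson_centered_mgf[OF sp centered, of l] l by auto
  have i2: "integrable M (\<lambda>x. exp (- l * Y x))"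
    and b2: "expectation (\<lambda>x. exp (- l * Y x)) \<le> exp (s2 * (exp l - 1 - l))"
    using sub_poisson_centered_mgf[OF sp centered, of "- l"] l by auto
  have "(\<lambda>x. exp (l * \<bar>Y x\<bar>)) = (\<lambda>x. max (exp (l * Y x)) (exp (- l * Y x)))"
    using l by (auto simp: abs_if max_def mult_le_0_iff intro!: ext)
  with i1 i2 show iE: "integrable M (\<lambda>x. exp (l * \<bar>Y x\<bar>))" by (simp add: integrable_max)
  have "expectation (\<lambda>x. exp (l * \<bar>Y x\<bar>))
      \<le> expectation (\<lambda>x. exp (l * Y x) + exp (- l * Y x) - 1 + l * \<bar>Y x\<bar>)"
    using i1 i2 iA iE by (intro integral_mono exp_abs_le) auto
  also have "\<dots> = expectation (\<lambda>x. exp (l * Y x)) + expectation (\<lambda>x. exp (- l * Y x)) - 1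
      + l * expectation (\<lambda>x. \<bar>Y x\<bar>)"
    using i1 i2 iA by (simp add: prob_space)
  finally show "expectation (\<lambda>x. exp (l * \<bar>Y x\<bar>))
      \<le> 2 * exp (s2 * (exp l - 1 - l)) - 1 + l * expectation (\<lambda>x. \<bar>Y x\<bar>)"
    using b1 b2 by simp
qed

lemma sub_poisson_abs_mgf:
  assumes sp: "sub_poisson M Y s2" and centered: "expectation Y = 0" and l: "0 \<le> l"
  shows "integrable M (\<lambda>x. exp (l * (\<bar>Y x\<bar> - expectation (\<lambda>x. \<bar>Y x\<bar>))))"
    and "expectation (\<lambda>x. exp (l * (\<bar>Y x\<bar> - expectation (\<lambda>x. \<bar>Y x\<bar>))))
           \<le> exp (2 * s2 * (exp l - 1 - l))"
proof -
  define a where "a = expectation (\<lambda>x. \<bar>Y x\<bar>)"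
  define u where "u = s2 * (exp l - 1 - l)"
  have "0 \<le> a" unfolding a_def by simp
  have "0 \<le> u"
    unfolding u_def using sp exp_ge_add_one_self[of l]
    by (simp add: sub_poisson_def del: exp_ge_add_one_self)
  have eq: "(\<lambda>x. exp (l * (\<bar>Y x\<bar> - a))) = (\<lambda>x. exp (- (l * a)) * exp (l * \<bar>Y x\<bar>))"
    by (auto simp: algebra_simps simp flip: exp_add)
  show "integrable M (\<lambda>x. exp (l * (\<bar>Y x\<bar> - expectation (\<lambda>x. \<bar>Y x\<bar>))))"
    using sub_poisson_exp_abs_le(1)[OF sp centered l] unfolding a_def[symmetric] eq by simp
  have "expectation (\<lambda>x. exp (l * (\<bar>Y x\<bar> - a)))
      = exp (- (l * a)) * expectation (\<lambda>x. exp (l * \<bar>Y x\<bar>))"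
    unfolding eq by simp
  also have "\<dots> \<le> exp (- (l * a)) * (2 * exp u - 1 + l * a)"
    using sub_poisson_exp_abs_le(2)[OF sp centered l] by (simp add: a_def u_def)
  also have "\<dots> \<le> exp (2 * u)"
    using \<open>0 \<le> a\<close> \<open>0 \<le> u\<close> l by (intro exp_minus_mult_two_exp_le) auto
  finally show "expectation (\<lambda>x. exp (l * (\<bar>Y x\<bar> - expectation (\<lambda>x. \<bar>Y x\<bar>))))
      \<le> exp (2 * s2 * (exp l - 1 - l))"
    unfolding a_def u_def by (simp add: mult.assoc)
qed

end

locale sub_poisson_matrix = prob_space +
  fixes X :: "nat \<Rightarrow> nat \<Rightarrow> 'a \<Rightarrow> real" and n m :: nat and \<sigma>2 :: real
  assumes entries_indep: "indep_vars (\<lambda>_. borel) (\<lambda>(i, j). X i j) ({..<n} \<times> {..<m})"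
    and entries_centered: "\<And>i j. i < n \<Longrightarrow> j < m \<Longrightarrow> expectation (X i j) = 0"
    and entries_sub_poisson: "\<And>i j. i < n \<Longrightarrow> j < m \<Longrightarrow> sub_poisson M (X i j) \<sigma>2"
begin

lemma exp_row_dev_eq_prod:
  assumes "i < n"
  shows "exp (l * row_dev M X m i \<omega>)
           = (\<Prod>j<m. exp (l * (\<bar>X i j \<omega>\<bar> - expectation (\<lambda>\<omega>. \<bar>X i j \<omega>\<bar>))))"
  using assms entries_sub_poisson unfolding sub_poisson_def
  by (subst row_dev_eq_sum) (auto simp: exp_sum sum_distrib_left)

lemma row_dev_mgf_le:
  assumes T: "T \<subseteq> {..<n}" and l: "0 \<le> l"
  shows "integrable M (\<lambda>\<omega>. \<Prod>i\<in>T. exp (l * row_dev M X m i \<omega>))"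
    and "expectation (\<lambda>\<omega>. \<Prod>i\<in>T. exp (l * row_dev M X m i \<omega>))
           \<le> exp (2 * \<sigma>2 * (exp l - 1 - l)) ^ (card T * m)"
proof -
  define W where "W = (\<lambda>(i, j) \<omega>. exp (l * (\<bar>X i j \<omega>\<bar> - expectation (\<lambda>\<omega>. \<bar>X i j \<omega>\<bar>))))"
  have "finite T" using T finite_subset by blast
  have prod_eq: "(\<lambda>\<omega>. \<Prod>i\<in>T. exp (l * row_dev M X m i \<omega>)) = (\<lambda>\<omega>. \<Prod>p\<in>T \<times> {..<m}. W p \<omega>)"
  proof
    fix \<omega>
    have "(\<Prod>i\<in>T. exp (l * row_dev M X m i \<omega>)) = (\<Prod>i\<in>T. \<Prod>j<m. W (i, j) \<omega>)"
      using T by (intro prod.cong) (auto simp: W_def exp_row_dev_eq_prod)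
    also have "\<dots> = (\<Prod>p\<in>T \<times> {..<m}. W p \<omega>)"
      by (simp add: prod.cartesian_product case_prod_beta)
    finally show "(\<Prod>i\<in>T. exp (l * row_dev M X m i \<omega>)) = (\<Prod>p\<in>T \<times> {..<m}. W p \<omega>)" .
  qed
  have indW: "indep_vars (\<lambda>_. borel) W (T \<times> {..<m})"
  proof (rule indep_vars_subset)
    have "indep_vars (\<lambda>_. borel)
        (\<lambda>p \<omega>. (\<lambda>(i, j) z. exp (l * (\<bar>z\<bar> - expectation (\<lambda>\<omega>. \<bar>X i j \<omega>\<bar>)))) p ((\<lambda>(i, j). X i j) p \<omega>))
        ({..<n} \<times> {..<m})"
      by (rule indep_vars_compose2[OF entries_indep]) auto
    then show "indep_vars (\<lambda>_. borel) W ({..<n} \<times> {..<m})"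
      by (simp add: W_def case_prod_beta case_prod_beta')
  qed (use T in auto)
  have Wint: "integrable M (W p)" and Wle: "expectation (W p) \<le> exp (2 * \<sigma>2 * (exp l - 1 - l))"
    if "p \<in> T \<times> {..<m}" for p
    using that T sub_poisson_abs_mgf[OF entries_sub_poisson entries_centered l] by (auto simp: W_def)
  have Wnn: "0 \<le> W p \<omega>" for p \<omega> by (simp add: W_def case_prod_beta')
  show "integrable M (\<lambda>\<omega>. \<Prod>i\<in>T. exp (l * row_dev M X m i \<omega>))"
    unfolding prod_eq using \<open>finite T\<close> indW Wint by (intro indep_vars_integrable) auto
  have "expectation (\<lambda>\<omega>. \<Prod>i\<in>T. exp (l * row_dev M X m i \<omega>))
      = (\<Prod>p\<in>T \<times> {..<m}. expectation (W p))"
    unfolding prod_eq using \<open>finite T\<close> indW Wint by (intro indep_vars_lebesgue_integral) auto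
  also have "\<dots> \<le> (\<Prod>p\<in>T \<times> {..<m}. exp (2 * \<sigma>2 * (exp l - 1 - l)))"
    using Wle Wnn by (intro prod_mono conjI integral_nonneg_AE AE_I2) auto
  also have "\<dots> = exp (2 * \<sigma>2 * (exp l - 1 - l)) ^ (card T * m)"
    by (simp add: card_cartesian_product)
  finally show "expectation (\<lambda>\<omega>. \<Prod>i\<in>T. exp (l * row_dev M X m i \<omega>))
      \<le> exp (2 * \<sigma>2 * (exp l - 1 - l)) ^ (card T * m)" .
qed

lemma row_dev_joint_tail:
  assumes T: "T \<subseteq> {..<n}" and l: "0 \<le> l"
  shows "prob {\<omega> \<in> space M. \<forall>i\<in>T. x \<le> row_dev M X m i \<omega>}
           \<le> exp (- l * x + 2 * (real m * \<sigma>2) * (exp l - 1 - l)) ^ card T"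
proof -
  define F where "F = (\<lambda>\<omega>. \<Prod>i\<in>T. exp (l * row_dev M X m i \<omega>))"
  define c where "c = exp (l * x) ^ card T"
  have F_int: "integrable M F"
    unfolding F_def by (rule row_dev_mgf_le(1)[OF T l])
  have "{\<omega> \<in> space M. \<forall>i\<in>T. x \<le> row_dev M X m i \<omega>} \<subseteq> {\<omega> \<in> space M. c \<le> F \<omega>}"
    unfolding c_def F_def using l by (auto simp flip: prod_constant intro!: prod_mono mult_left_mono)
  then have "prob {\<omega> \<in> space M. \<forall>i\<in>T. x \<le> row_dev M X m i \<omega>} \<le> prob {\<omega> \<in> space M. c \<le> F \<omega>}"
    using borel_measurable_integrable[OF F_int] by (intro finite_measure_mono) measurable
  also have "\<dots> \<le> expectation F / c"
    using F_int by (intro integral_Markov_inequality_measure[where A = "space M"])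
      (auto simp: F_def c_def prod_nonneg)
  also have "\<dots> \<le> exp (2 * \<sigma>2 * (exp l - 1 - l)) ^ (card T * m) / c"
    unfolding F_def c_def using row_dev_mgf_le(2)[OF T l] by (simp add: divide_right_mono)
  also have "\<dots> = (exp (real m * (2 * \<sigma>2 * (exp l - 1 - l))) / exp (l * x)) ^ card T"
    by (simp add: c_def power_mult mult.commute[of "card T"] power_divide flip: exp_of_nat_mult)
  also have "\<dots> = exp (- l * x + 2 * (real m * \<sigma>2) * (exp l - 1 - l)) ^ card T"
    by (simp add: algebra_simps flip: exp_diff)
  finally show ?thesis .
qed

lemma row_dev_count_tail:
  assumes l: "0 \<le> l"
  shows "prob {\<omega> \<in> space M. k \<le> card {i. i < n \<and> x \<le> row_dev M X m i \<omega>}}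
           \<le> real (n choose k) * exp (- l * x + 2 * (real m * \<sigma>2) * (exp l - 1 - l)) ^ k"
proof -
  have "X i j \<in> borel_measurable M" if "i < n" "j < m" for i j
    using entries_indep that unfolding indep_vars_def by auto
  then have "{\<omega> \<in> space M. x \<le> row_dev M X m i \<omega>} \<in> events" if "i < n" for i
    using row_dev_measurable[of m X i M] that by measurable
  then have "prob {\<omega> \<in> space M. k \<le> card {i \<in> {..<n}. x \<le> row_dev M X m i \<omega>}}
      \<le> real (card {..<n} choose k) * exp (- l * x + 2 * (real m * \<sigma>2) * (exp l - 1 - l)) ^ k"
    using row_dev_joint_tail[OF _ l] by (intro measure_card_ge_le_choose) auto
  then show ?thesis by simp
qed

lemma row_dev_count_tail_small_variance:
  assumes "1 \<le> n" and "0 \<le> \<sigma>2" and small: "real m * \<sigma>2 \<le> 8 * ln (exp 1 * real n)" and t: "0 \<le> t"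
  shows "prob {\<omega> \<in> space M. exp 1 * real n / exp (real m * \<sigma>2 / 8)
             \<le> real (card {i. i < n \<and> (1 + t) * real m * \<sigma>2 \<le> row_dev M X m i \<omega>})}
           \<le> (exp 1 * real n) powr (- t)"
proof -
  define w where "w = real m * \<sigma>2 / 8"
  define K where "K = exp 1 * real n / exp w"
  define C where "C \<omega> = card {i. i < n \<and> (1 + t) * real m * \<sigma>2 \<le> row_dev M X m i \<omega>}" for \<omega>
  have "C \<omega> \<le> n" for \<omega> unfolding C_def by (rule card_mono[of "{..<n}", simplified]) auto
  have "prob {\<omega> \<in> space M. K \<le> real (C \<omega>)} \<le> (exp 1 * real n) powr (- t)"
  proof (cases "1 \<le> w")
    case False
    then have "exp w < exp 1" by simp
    then have "real n < K" using \<open>1 \<le> n\<close> by (simp add: K_def field_simps)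
    with \<open>\<And>\<omega>. C \<omega> \<le> n\<close> have "{\<omega> \<in> space M. K \<le> real (C \<omega>)} = {}"
      by (auto simp: not_le intro: le_less_trans[OF of_nat_mono])
    then show ?thesis by (metis measure_empty powr_ge_zero)
  next
    case True
    define l :: real where "l = 1 / 4"
    define k where "k = nat \<lceil>K\<rceil>"
    have "exp l - 1 - l \<le> l\<^sup>2"
      by (rule exp_minus_one_minus_le_square) (simp_all add: l_def)
    then have p: "exp (- l * ((1 + t) * real m * \<sigma>2) + 2 * (real m * \<sigma>2) * (exp l - 1 - l))
        \<le> exp (- w - 2 * t * w)"
      using \<open>0 \<le> \<sigma>2\<close> by (simp add: l_def w_def power2_eq_square algebra_simps mult_left_mono)
    have "prob {\<omega> \<in> space M. K \<le> real (C \<omega>)} = prob {\<omega> \<in> space M. k \<le> C \<omega>}"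
      by (simp add: k_def nat_le_iff ceiling_le_iff)
    also have "\<dots> \<le> real (n choose k)
        * exp (- l * ((1 + t) * real m * \<sigma>2) + 2 * (real m * \<sigma>2) * (exp l - 1 - l)) ^ k"
      unfolding C_def by (rule row_dev_count_tail) (auto simp: l_def)
    also have "\<dots> \<le> real (n choose k) * exp (- w - 2 * t * w) ^ k"
      using p by (intro mult_left_mono power_mono) auto
    also have "\<dots> \<le> (exp 1 * real n) powr (- t)"
      using True small t real_nat_ceiling_ge[of K]
      by (intro choose_mult_exp_power_le) (auto simp: w_def K_def k_def)
    finally show ?thesis .
  qed
  then show ?thesis unfolding K_def w_def C_def .
qed

lemma row_dev_max_tail_large_variance:
  assumes "1 \<le> n" and large: "8 * ln (exp 1 * real n) \<le> real m * \<sigma>2" and t: "0 \<le> t"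
  shows "prob {\<omega> \<in> space M. (1 + t) * sqrt (8 * real m * \<sigma>2 * ln (exp 1 * real n))
             \<le> Max ((\<lambda>i. row_dev M X m i \<omega>) ` {..<n})}
           \<le> (exp 1 * real n) powr (- t)"
proof -
  define L where "L = ln (exp 1 * real n)"
  define v where "v = real m * \<sigma>2"
  define x where "x = (1 + t) * sqrt (8 * v * L)"
  define l where "l = sqrt (L / (2 * v))"
  have "1 \<le> L" using \<open>1 \<le> n\<close> by (simp add: L_def ln_mult)
  with large have "0 < v" by (simp add: L_def v_def)
  have l2: "l\<^sup>2 = L / (2 * v)" using \<open>1 \<le> L\<close> \<open>0 < v\<close> by (simp add: l_def)
  have "0 \<le> l" and "l \<le> 1"
    using large \<open>1 \<le> L\<close> \<open>0 < v\<close> by (auto simp: l_def L_def v_def field_simps)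
  have "l * x = (1 + t) * sqrt ((2 * L)\<^sup>2)"
    using \<open>0 < v\<close> by (simp add: l_def x_def field_simps power2_eq_square flip: real_sqrt_mult)
  also have "\<dots> = 2 * (1 + t) * L" using \<open>1 \<le> L\<close> by (simp only: real_sqrt_abs)
  finally have lx: "l * x = 2 * (1 + t) * L" .
  have "2 * v * (exp l - 1 - l) \<le> 2 * v * l\<^sup>2"
    using exp_minus_one_minus_le_square[OF \<open>0 \<le> l\<close> \<open>l \<le> 1\<close>] \<open>0 < v\<close> by (intro mult_left_mono) auto
  also have "\<dots> = L" using l2 \<open>0 < v\<close> by simp
  finally have p: "exp (- l * x + 2 * v * (exp l - 1 - l)) \<le> exp (- L - 2 * t * L)"
    using lx by (simp add: algebra_simps)
  have "x \<le> Max ((\<lambda>i. row_dev M X m i \<omega>) ` {..<n})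
      \<longleftrightarrow> 1 \<le> card {i. i < n \<and> x \<le> row_dev M X m i \<omega>}" for \<omega>
  proof -
    have "x \<le> Max ((\<lambda>i. row_dev M X m i \<omega>) ` {..<n}) \<longleftrightarrow> (\<exists>i<n. x \<le> row_dev M X m i \<omega>)"
      using \<open>1 \<le> n\<close> by (subst Max_ge_iff) (auto simp: lessThan_empty_iff)
    also have "\<dots> \<longleftrightarrow> 1 \<le> card {i. i < n \<and> x \<le> row_dev M X m i \<omega>}"
      by (auto simp: card_gt_0_iff Suc_le_eq)
    finally show ?thesis .
  qed
  then have "prob {\<omega> \<in> space M. x \<le> Max ((\<lambda>i. row_dev M X m i \<omega>) ` {..<n})}
      = prob {\<omega> \<in> space M. 1 \<le> card {i. i < n \<and> x \<le> row_dev M X m i \<omega>}}"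
    by simp
  also have "\<dots> \<le> real (n choose 1) * exp (- l * x + 2 * v * (exp l - 1 - l)) ^ 1"
    unfolding v_def by (rule row_dev_count_tail) (use \<open>0 \<le> l\<close> in auto)
  also have "\<dots> \<le> real n * exp (- L - 2 * t * L)"
    using mult_left_mono[OF p, of "real n"] by simp
  also have "\<dots> \<le> exp L * exp (- L - 2 * t * L)"
    using \<open>1 \<le> n\<close> mult_right_mono[of 1 "exp 1" "real n"] by (intro mult_right_mono) (auto simp: L_def)
  also have "\<dots> \<le> exp (- t * L)"
    using t \<open>1 \<le> L\<close> by (simp add: mult_nonneg_nonneg flip: exp_add)
  also have "\<dots> = (exp 1 * real n) powr (- t)"
    using \<open>1 \<le> n\<close> by (simp add: L_def powr_def)
  finally show ?thesis unfolding x_def v_def L_def by (simp add: mult.assoc)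
qed

end

theorem lemmaD2:
  fixes M :: "'a measure" and X :: "nat \<Rightarrow> nat \<Rightarrow> 'a \<Rightarrow> real"
    and n m :: nat and \<sigma>2 :: real
  assumes "prob_space M"
    and "n \<ge> 1" and "m \<ge> 1"
    and "\<sigma>2 \<ge> 0"
    and indep: "prob_space.indep_vars M (\<lambda>_. borel) (\<lambda>(i, j). X i j) ({..<n} \<times> {..<m})"
    and centered: "\<And>i j. i < n \<Longrightarrow> j < m \<Longrightarrow> integral\<^sup>L M (X i j) = 0"
    and subP: "\<And>i j. i < n \<Longrightarrow> j < m \<Longrightarrow> sub_poisson M (X i j) \<sigma>2"
  shows "(real m * \<sigma>2 \<le> 8 * ln (exp 1 * real n) \<longrightarrow>
           (\<forall>t\<ge>0. measure M {\<omega> \<in> space M.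
               real (card {i. i < n \<and> row_dev M X m i \<omega> \<ge> (1 + t) * real m * \<sigma>2})
                 \<ge> exp 1 * real n / exp (real m * \<sigma>2 / 8)}
             \<le> (exp 1 * real n) powr (- t)))
       \<and> (real m * \<sigma>2 \<ge> 8 * ln (exp 1 * real n) \<longrightarrow>
           (\<forall>t\<ge>0. measure M {\<omega> \<in> space M.
               Max ((\<lambda>i. row_dev M X m i \<omega>) ` {..<n})
                 \<ge> (1 + t) * sqrt (8 * real m * \<sigma>2 * ln (exp 1 * real n))}
             \<le> (exp 1 * real n) powr (- t)))"
proof -
  interpret sub_poisson_matrix M X n m \<sigma>2
    using assms(1) indep centered subP by (simp add: sub_poisson_matrix_def sub_poisson_matrix_axioms_def)
  show ?thesis
    by (intro conjI impI allI row_dev_count_tail_small_variance[OF assms(2,4)]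
        row_dev_max_tail_large_variance[OF assms(2)])
qed

end
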